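(* Let $x=(x_0x_1)^{-1}$ and $y=x_2xx_2^{-1}$. For every integer $n\ge1$, $x^n$ has one of the forms $M_0([28,235,129],[29,211,263],\dots)$, $M_0([28,235,129],[46,138,451],\dots)$, $M_{2^r-1}([51,89,196],[0,0,0],\dots)$ for some odd $r\ge1$, or $M_{2^r-1}([28,235,129],[0,0,0],\dots)$ for some even $r\ge2$; and for every $n\ge1$, $y^n$ has one of the forms $M_0([28,235,129],[58,3,445],\dots)$, $M_0([28,235,129],[9,90,377],\dots)$, $M_{2^r-1}([51,89,196],[0,157,106],\dots)$ for some odd $r\ge1$, or $M_{2^r-1}([28,235,129],[39,208,186],\dots)$ for some even $r\ge2$.
   Context: Consider infinite upper unitriangular block matrices $X=(X_{r,s})_{r,s\ge1}$ whose entries are $3\times3$ matrices over $\mathbb F_2$, with $X_{r,r}=I$, $X_{r,s}=0$ for $s<r$, and whose upper diagonals are $3$-periodic: for each $j\ge1$ there are $a_{j1},a_{j2},a_{j3}\in M(3,\mathbb F_2)$ with $X_{r,r+j}=a_{j,i}$, where $i\in\{1,2,3\}$, $i\equiv r\pmod 3$; $a_j=[a_{j1},a_{j2},a_{j3}]$ is the $j$-th upper diagonal. For $l\ge0$, $M_l(c_1,c_2,\dots)$ denotes such a matrix whose first $l$ upper diagonals are zero and whose $(l+1)$-st, $(l+2)$-nd, $\dots$ upper diagonals are $c_1,c_2,\dots$; diagonals hidden in "$\dots$" are unspecified, while a matrix written $M_0(c_1,\dots,c_m)$ without dots has all further diagonals zero. A matrix $u=(u_{pq})\in M(3,\mathbb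 F_2)$ is encoded by the integer $256u_{11}+128u_{12}+64u_{13}+32u_{21}+16u_{22}+8u_{23}+4u_{31}+2u_{32}+u_{33}$, and a diagonal by the triple of integers of its three blocks. The elements are $x_0=M_0([11,11,11],[17,17,17],[26,26,26],[11,11,0],[17,0,0])$, $x_1=M_0([23,224,138],[59,136,495],[26,488,227],[23,224,0],[59,0,0])$, $x_2=M_0([46,68,217],[12,194,363],[26,326,77],[46,68,0],[12,0,0])$. *)

theory Defs
  imports "HOL-Analysis.Analysis" "HOL-Library.Z2"
begin

type_synonym blk = "bit^3^3"

text \<open>Infinite block matrices, block (r,s) for r,s >= 1 (index 0 is unused).\<close>
type_synonym imat = "nat \<Rightarrow> nat \<Rightarrow> blk"

definition idx3 :: "3 \<Rightarrow> nat" where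
  "idx3 p = (if p = 0 then 0 else if p = 1 then 1 else 2)"

text \<open>Integer encoding: 256 u11 + 128 u12 + 64 u13 + 32 u21 + ... + u33.\<close>
definition blk_of_code :: "nat \<Rightarrow> blk" where
  "blk_of_code c = (\<chi> p q. of_bool (odd (c div 2 ^ (8 - (3 * idx3 p + idx3 q)))))"

text \<open>A diagonal given by the integer codes of its three blocks.\<close>
type_synonym dcode = "nat \<times> nat \<times> nat"

definition diag_blk :: "dcode \<Rightarrow> nat \<Rightarrow> blk" where
  "diag_blk c i = (case c of (a, b, d) \<Rightarrow>
      blk_of_code (if i = 1 then a else if i = 2 then b else d))"

definition cls3 :: "nat \<Rightarrow> nat" where
  "cls3 r = (if r mod 3 = 0 then 3 else r mod 3)"

definition Iim :: imat where
  "Iim r s = (if r = s then mat 1 else 0)"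

definition imult :: "imat \<Rightarrow> imat \<Rightarrow> imat" (infixl "\<odot>" 70) where
  "(X \<odot> Y) r s = (\<Sum>t\<in>{r..s}. X r t ** Y t s)"

fun ipow :: "imat \<Rightarrow> nat \<Rightarrow> imat" where
  "ipow X 0 = Iim"
| "ipow X (Suc n) = X \<odot> ipow X n"

text \<open>Inverse of an upper unitriangular matrix X = I + N: (I + N)^{-1} = sum_k (-N)^k,
  where only k <= s - r contribute to entry (r,s).\<close>
definition iinv :: "imat \<Rightarrow> imat" where
  "iinv X r s = (\<Sum>k\<le>s - r. ipow (\<lambda>a b. - (X a b - Iim a b)) k r s)"

definition upper_unitri :: "imat \<Rightarrow> bool" where
  "upper_unitri X \<longleftrightarrow> (\<forall>r\<ge>1. X r r = mat 1) \<and> (\<forall>r s. 1 \<le> s \<and> s < r \<longrightarrow> X r s = 0)"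

definition periodic3 :: "imat \<Rightarrow> bool" where
  "periodic3 X \<longleftrightarrow> (\<forall>r s. 1 \<le> r \<and> 1 \<le> s \<longrightarrow> X (r + 3) (s + 3) = X r s)"

text \<open>M_l(c_1,...,c_m,...): diagonals 1..l zero, diagonals l+1,...,l+m equal to c_1..c_m,
  further diagonals unspecified.\<close>
definition is_M :: "nat \<Rightarrow> dcode list \<Rightarrow> imat \<Rightarrow> bool" where
  "is_M l cs X \<longleftrightarrow> upper_unitri X \<and> periodic3 X \<and>
     (\<forall>j i. 1 \<le> j \<and> j \<le> l \<and> 1 \<le> i \<and> i \<le> 3 \<longrightarrow> X i (i + j) = 0) \<and>
     (\<forall>k i. k < length cs \<and> 1 \<le> i \<and> i \<le> 3 \<longrightarrow> X i (i + l + 1 + k) = diag_blk (cs ! k) i)"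

text \<open>M_0(c_1,...,c_m) without dots: all further diagonals zero.\<close>
definition Mfin :: "dcode list \<Rightarrow> imat" where
  "Mfin cs r s = (if s < r then 0 else if s = r then mat 1
                  else if s - r \<le> length cs then diag_blk (cs ! (s - r - 1)) (cls3 r) else 0)"

definition x0 :: imat where
  "x0 = Mfin [(11,11,11),(17,17,17),(26,26,26),(11,11,0),(17,0,0)]"
definition x1 :: imat where
  "x1 = Mfin [(23,224,138),(59,136,495),(26,488,227),(23,224,0),(59,0,0)]"
definition x2 :: imat where
  "x2 = Mfin [(46,68,217),(12,194,363),(26,326,77),(46,68,0),(12,0,0)]"

definition xx :: imat where
  "xx = iinv (x0 \<odot> x1)"
definition yy :: imat where
  "yy = x2 \<odot> xx \<odot> iinv x2"

end

theory Submission
  imports Defs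
begin

text \<open>
  Say that a unitriangular \<open>Y\<close> has leading diagonals \<open>(l, C, D)\<close> if its first \<open>l\<close> upper
  diagonals vanish and the next two are \<open>C\<close> and \<open>D\<close>. On the first \<open>2l + 1\<close> upper diagonals of
  \<open>Y * Y\<close> every term other than the two through the main diagonal meets the zero band, and those
  two cancel in characteristic 2, so
  \<open>Y\<^sup>2\<close> has leading diagonals \<open>(2l + 1, C r C (r+l+1), C r D (r+l+1) + D r C (r+l+2))\<close>.
  Starting from \<open>x\<close> with \<open>l = 0\<close>, for \<open>n = 2^v m\<close> with \<open>m\<close> odd and \<open>v \<ge> 1\<close> the power \<open>x^n\<close>
  therefore has \<open>2^v - 1\<close> zero diagonals; as the diagonals are 3-periodic and \<open>2^v mod 3\<close>
  alternates between 2 and 1, the next two diagonals depend only on the parity of \<open>v\<close>.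
  An odd power \<open>x^(2m+1) = x x^(2m)\<close> keeps the first diagonal of \<open>x\<close>, and its second one
  changes exactly when \<open>m\<close> is odd, i.e. when \<open>x^(2m)\<close> has a single zero diagonal. Strong
  induction on \<open>n\<close> leaves finitely many identities between \<open>3 \<times> 3\<close> matrices over \<open>F\<^sub>2\<close>,
  checked by evaluation; the same argument applies to \<open>y\<close>.
\<close>

lemma blk_double [simp]: "2 * (a::blk) = 0"
  by (simp add: vec_eq_iff)

lemma blk_uminus [simp]: "- (a::blk) = a"
  by (simp add: vec_eq_iff)

lemma blk_diff [simp]: "(a::blk) - b = a + b"
  by (simp add: vec_eq_iff)

lemma matrix_add_rdistrib: "((A::'a::semiring_1^'n^'m) + B) ** C = A ** C + B ** C"
  by (vector matrix_matrix_mult_def sum.distrib[symmetric] field_simps)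

lemma matrix_sum_rdistrib:
  fixes M :: "'a::semiring_1^'p^'n" and f :: "'i \<Rightarrow> 'a^'n^'m"
  shows "sum f S ** M = (\<Sum>k\<in>S. f k ** M)"
  by (induct S rule: infinite_finite_induct) (simp_all add: matrix_add_rdistrib)

lemma matrix_sum_ldistrib:
  fixes M :: "'a::semiring_1^'n^'m" and f :: "'i \<Rightarrow> 'a^'p^'n"
  shows "M ** sum f S = (\<Sum>k\<in>S. M ** f k)"
  by (induct S rule: infinite_finite_induct) (simp_all add: matrix_add_ldistrib)

lemma imult_assoc: "(X \<odot> Y) \<odot> Z = X \<odot> (Y \<odot> Z)"
proof (intro ext)
  fix r s
  let ?g = "\<lambda>t u. X r u ** Y u t ** Z t s"
  have "((X \<odot> Y) \<odot> Z) r s = (\<Sum>t\<in>{r..s}. \<Sum>u\<in>{r..t}. ?g t u)"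
    by (simp add: imult_def matrix_sum_rdistrib)
  also have "\<dots> = (\<Sum>t\<in>{r..s}. \<Sum>u\<in>{u\<in>{r..s}. u \<le> t}. ?g t u)"
    by (intro sum.cong) auto
  also have "\<dots> = (\<Sum>u\<in>{r..s}. \<Sum>t\<in>{t\<in>{r..s}. u \<le> t}. ?g t u)"
    by (rule sum.swap_restrict) simp_all
  also have "\<dots> = (\<Sum>u\<in>{r..s}. \<Sum>t\<in>{u..s}. ?g t u)"
    by (intro sum.cong) auto
  also have "\<dots> = (X \<odot> (Y \<odot> Z)) r s"
    by (simp add: imult_def matrix_sum_ldistrib matrix_mul_assoc)
  finally show "((X \<odot> Y) \<odot> Z) r s = (X \<odot> (Y \<odot> Z)) r s" .
qed

definition upper_tri :: "imat \<Rightarrow> bool" where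
  "upper_tri X \<longleftrightarrow> (\<forall>r s. s < r \<longrightarrow> X r s = 0)"

definition unit_diag :: "imat \<Rightarrow> bool" where
  "unit_diag X \<longleftrightarrow> (\<forall>r. X r r = mat 1)"

lemma upper_tri_imult [simp]: "upper_tri (X \<odot> Y)"
  by (simp add: upper_tri_def imult_def)

lemma upper_tri_Iim [simp]: "upper_tri Iim"
  by (simp add: upper_tri_def Iim_def)

lemma upper_tri_ipow [simp]: "upper_tri (ipow X n)"
  by (cases n) simp_all

lemma upper_tri_iinv [simp]: "upper_tri (iinv X)"
  by (simp add: upper_tri_def iinv_def Iim_def)

lemma unit_diag_iinv [simp]: "unit_diag (iinv X)"
  by (simp add: unit_diag_def iinv_def Iim_def)

lemma Iim_imult: "upper_tri X \<Longrightarrow> Iim \<odot> X = X"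
proof (intro ext)
  fix r s assume "upper_tri X"
  have "(Iim \<odot> X) r s = (\<Sum>t\<in>{r..s}. if t = r then X r s else 0)"
    unfolding imult_def by (rule sum.cong) (auto simp: Iim_def)
  then show "(Iim \<odot> X) r s = X r s"
    using \<open>upper_tri X\<close> by (simp add: upper_tri_def)
qed

lemma imult_Iim: "upper_tri X \<Longrightarrow> X \<odot> Iim = X"
proof (intro ext)
  fix r s assume "upper_tri X"
  have "(X \<odot> Iim) r s = (\<Sum>t\<in>{r..s}. if t = s then X r s else 0)"
    unfolding imult_def by (rule sum.cong) (auto simp: Iim_def)
  then show "(X \<odot> Iim) r s = X r s"
    using \<open>upper_tri X\<close> by (simp add: upper_tri_def)
qed

lemma ipow_add: "ipow X (m + n) = ipow X m \<odot> ipow X n"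
  by (induct m) (simp_all add: Iim_imult imult_assoc)

lemma imult_diag: "(X \<odot> Y) r (r + j) = (\<Sum>k\<le>j. X r (r + k) ** Y (r + k) (r + j))"
proof -
  have "(X \<odot> Y) r (r + j) = (\<Sum>t\<in>{0+r..j+r}. X r t ** Y t (r + j))"
    by (simp add: imult_def add.commute)
  also have "\<dots> = (\<Sum>k\<in>{0..j}. X r (k + r) ** Y (k + r) (r + j))"
    by (rule sum.shift_bounds_cl_nat_ivl)
  finally show ?thesis by (simp add: atLeast0AtMost add.commute)
qed

lemma imult_diag0: "(X \<odot> Y) r r = X r r ** Y r r"
  using imult_diag[of X Y r 0] by simp

lemma unit_diag_imult: "unit_diag X \<Longrightarrow> unit_diag Y \<Longrightarrow> unit_diag (X \<odot> Y)"
  by (simp add: unit_diag_def imult_diag0)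

lemma imult_diag1:
  "unit_diag X \<Longrightarrow> unit_diag Y \<Longrightarrow> (X \<odot> Y) r (Suc r) = X r (Suc r) + Y r (Suc r)"
  using imult_diag[of X Y r 1] by (simp add: unit_diag_def add.commute)

lemma imult_diag2:
  "unit_diag X \<Longrightarrow> unit_diag Y \<Longrightarrow>
   (X \<odot> Y) r (Suc (Suc r)) = X r (Suc (Suc r)) + X r (Suc r) ** Y (Suc r) (Suc (Suc r)) + Y r (Suc (Suc r))"
  using imult_diag[of X Y r 2] by (simp add: unit_diag_def numeral_2_eq_2 add.commute)

definition leading_diags :: "nat \<Rightarrow> (nat \<Rightarrow> blk) \<Rightarrow> (nat \<Rightarrow> blk) \<Rightarrow> imat \<Rightarrow> bool" where
  "leading_diags l C D X \<longleftrightarrow>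
     upper_tri X \<and> unit_diag X \<and> (\<forall>r j. 0 < j \<and> j \<le> l \<longrightarrow> X r (r + j) = 0) \<and>
     (\<forall>r. X r (r + l + 1) = C r) \<and> (\<forall>r. X r (r + l + 2) = D r)"

definition square_diag1 :: "nat \<Rightarrow> (nat \<Rightarrow> blk) \<Rightarrow> nat \<Rightarrow> blk" where
  "square_diag1 s C = (\<lambda>r. C r ** C (r + s))"

definition square_diag2 :: "nat \<Rightarrow> (nat \<Rightarrow> blk) \<Rightarrow> (nat \<Rightarrow> blk) \<Rightarrow> nat \<Rightarrow> blk" where
  "square_diag2 s C D = (\<lambda>r. C r ** D (r + s) + D r ** C (r + s + 1))"

lemma leading_diags_0_iff:
  "leading_diags 0 C D X \<longleftrightarrow>
     upper_tri X \<and> unit_diag X \<and> (\<forall>r. X r (Suc r) = C r) \<and> (\<forall>r. X r (Suc (Suc r)) = D r)"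
  by (simp add: leading_diags_def)

lemma leading_diags_gap: "leading_diags l C D X \<Longrightarrow> 0 < j \<Longrightarrow> j \<le> l \<Longrightarrow> X r (r + j) = 0"
  by (simp add: leading_diags_def)

lemma leading_diags_square:
  assumes lead: "leading_diags l C D X"
  shows "leading_diags (2 * l + 1) (square_diag1 (l + 1) C) (square_diag2 (l + 1) C D) (X \<odot> X)"
proof -
  have diag: "X r r = mat 1" for r
    using lead by (simp add: leading_diags_def unit_diag_def)
  have C: "X a b = C a" if "b = a + l + 1" for a b
    using lead that by (simp add: leading_diags_def)
  have D: "X a b = D a" if "b = a + l + 2" for a b
    using lead that by (simp add: leading_diags_def)
  have vanish: "X r (r + k) ** X (r + k) (r + j) = 0" if "0 < k" "k < j" "k \<le> l \<or> j - k \<le> l" for r j k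
    using that leading_diags_gap[OF lead, of k r] leading_diags_gap[OF lead, of "j - k" "r + k"] by auto
  have supported: "(X \<odot> X) r (r + j) = (\<Sum>k\<in>S. X r (r + k) ** X (r + k) (r + j))"
    if "S \<subseteq> {..j}" "\<And>k. k \<le> j \<Longrightarrow> k \<notin> S \<Longrightarrow> 0 < k \<and> k < j \<and> (k \<le> l \<or> j - k \<le> l)"
    for r j S
    unfolding imult_diag
  proof (rule sum.mono_neutral_right)
    show "\<forall>k\<in>{..j} - S. X r (r + k) ** X (r + k) (r + j) = 0"
    proof
      fix k assume "k \<in> {..j} - S"
      with that(2) show "X r (r + k) ** X (r + k) (r + j) = 0"
        by (auto intro: vanish)
    qed
  qed (use that in simp_all)
  have band: "(X \<odot> X) r (r + j) = 0" if "0 < j" "j \<le> 2 * l + 1" for r j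
  proof -
    have "0 < k \<and> k < j \<and> (k \<le> l \<or> j - k \<le> l)" if "k \<le> j" "k \<notin> {0, j}" for k
      using that \<open>j \<le> 2 * l + 1\<close> by auto
    then show ?thesis
      using supported[of "{0, j}" j r] \<open>0 < j\<close> by (simp add: diag)
  qed
  have first: "(X \<odot> X) r (r + (2 * l + 1) + 1) = square_diag1 (l + 1) C r" for r
  proof -
    have "X r (r + (l + 1)) = C r" "X (r + (l + 1)) (r + (2 * l + 2)) = C (r + (l + 1))"
      by (simp_all add: C)
    moreover have "0 < k \<and> k < 2 * l + 2 \<and> (k \<le> l \<or> 2 * l + 2 - k \<le> l)"
      if "k \<le> 2 * l + 2" "k \<notin> {0, l + 1, 2 * l + 2}" for k
      using that by auto
    ultimately show ?thesis
      using supported[of "{0, l + 1, 2 * l + 2}" "2 * l + 2" r] by (simp add: diag square_diag1_def)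
  qed
  have second: "(X \<odot> X) r (r + (2 * l + 1) + 2) = square_diag2 (l + 1) C D r" for r
  proof -
    have "X r (r + (l + 1)) = C r" "X (r + (l + 1)) (r + (2 * l + 3)) = D (r + (l + 1))"
      "X r (r + (l + 2)) = D r" "X (r + (l + 2)) (r + (2 * l + 3)) = C (r + (l + 1) + 1)"
      by (simp_all add: C D)
    moreover have "0 < k \<and> k < 2 * l + 3 \<and> (k \<le> l \<or> 2 * l + 3 - k \<le> l)"
      if "k \<le> 2 * l + 3" "k \<notin> {0, l + 1, l + 2, 2 * l + 3}" for k
      using that by auto
    ultimately show ?thesis
      using supported[of "{0, l + 1, l + 2, 2 * l + 3}" "2 * l + 3" r]
      by (simp add: diag square_diag2_def numeral_3_eq_3)
  qed
  show ?thesis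
    using band first second diag by (simp add: leading_diags_def unit_diag_def imult_diag0)
qed

lemma leading_diags_imult:
  assumes "leading_diags 0 A B X" "leading_diags 0 C D Y"
    and "(\<lambda>r. A r + C r) = E" "(\<lambda>r. B r + A r ** C (r + 1) + D r) = F"
  shows "leading_diags 0 E F (X \<odot> Y)"
  using assms by (auto simp: leading_diags_0_iff imult_diag1 imult_diag2 unit_diag_imult)

lemma leading_diags_imult_sparse:
  assumes X: "leading_diags 0 A B X" and Y: "leading_diags l C D Y" and "1 \<le> l"
  shows "leading_diags 0 A (\<lambda>r. B r + (if l = 1 then C r else 0)) (X \<odot> Y)"
proof -
  have "Y r (Suc r) = 0" for r
    using leading_diags_gap[OF Y, of 1 r] \<open>1 \<le> l\<close> by simp
  moreover have "Y r (Suc (Suc r)) = (if l = 1 then C r else 0)" for r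
    using leading_diags_gap[OF Y, of 2 r] Y \<open>1 \<le> l\<close> by (auto simp: leading_diags_def)
  moreover have "unit_diag Y"
    using Y by (simp add: leading_diags_def)
  ultimately show ?thesis
    using X by (simp add: leading_diags_0_iff imult_diag1 imult_diag2 unit_diag_imult)
qed

lemma leading_diags_iinv:
  assumes X: "leading_diags 0 C D X" and F: "(\<lambda>r. D r + C r ** C (r + 1)) = F"
  shows "leading_diags 0 C F (iinv X)"
proof -
  define N where "N = (\<lambda>a b. - (X a b - Iim a b))"
  have N: "N a b = (if a = b then 0 else X a b)" for a b
    using X by (simp add: N_def Iim_def leading_diags_def unit_diag_def)
  have "upper_tri N"
    using X by (simp add: upper_tri_def N leading_diags_def)
  then have N1: "N \<odot> Iim = N"
    by (rule imult_Iim)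
  have inv: "iinv X r s = (\<Sum>k\<le>s - r. ipow N k r s)" for r s
    by (simp add: iinv_def N_def)
  have N_square: "(N \<odot> N) r (Suc (Suc r)) = C r ** C (r + 1)" for r
    using X imult_diag[of N N r 2] by (simp add: numeral_2_eq_2 N leading_diags_0_iff)
  have "iinv X r (Suc r) = C r" for r
    using X by (simp add: inv N1 N Iim_def leading_diags_0_iff)
  moreover have "iinv X r (Suc (Suc r)) = D r + C r ** C (r + 1)" for r
    using X N_square by (simp add: inv numeral_2_eq_2 N1 N Iim_def leading_diags_0_iff)
  ultimately show ?thesis
    using F by (auto simp: leading_diags_0_iff)
qed

definition periodic3_seq :: "(nat \<Rightarrow> 'a) \<Rightarrow> bool" where
  "periodic3_seq F \<longleftrightarrow> (\<forall>r. F (r + 3) = F r)"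

lemma periodic3_seq_add_mod:
  assumes "periodic3_seq F"
  shows "F (r + s) = F (r + s mod 3)"
proof -
  have "F (r + s mod 3 + 3 * q) = F (r + s mod 3)" for q
  proof (induction q)
    case (Suc q)
    have "r + s mod 3 + 3 * Suc q = (r + s mod 3 + 3 * q) + 3"
      by simp
    with Suc show ?case
      using assms by (simp only: periodic3_seq_def)
  qed simp
  from this[of "s div 3"] show ?thesis
    by (simp add: add.assoc)
qed

lemma periodic3_seq_eqI:
  assumes "periodic3_seq f" "periodic3_seq g" "f 0 = g 0" "f 1 = g 1" "f 2 = g 2"
  shows "f = g"
proof
  fix r :: nat
  have "r mod 3 = 0 \<or> r mod 3 = 1 \<or> r mod 3 = 2"
    by arith
  then show "f r = g r"
    using assms periodic3_seq_add_mod[of f 0 r] periodic3_seq_add_mod[of g 0 r] by auto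
qed

lemma periodic3_seq_add: "periodic3_seq F \<Longrightarrow> periodic3_seq G \<Longrightarrow> periodic3_seq (\<lambda>r. F r + G r)"
  by (simp add: periodic3_seq_def)

lemma periodic3_seq_mult: "periodic3_seq F \<Longrightarrow> periodic3_seq G \<Longrightarrow> periodic3_seq (\<lambda>r. F r ** G r)"
  by (simp add: periodic3_seq_def)

lemma periodic3_seq_shift: "periodic3_seq F \<Longrightarrow> periodic3_seq (\<lambda>r. F (r + s))"
  unfolding periodic3_seq_def by (metis add.assoc add.commute)

lemma square_diag1_mod3: "periodic3_seq C \<Longrightarrow> square_diag1 s C = square_diag1 (s mod 3) C"
  by (simp add: square_diag1_def periodic3_seq_add_mod[of C _ s])

lemma square_diag2_mod3:
  assumes "periodic3_seq C" "periodic3_seq D"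
  shows "square_diag2 s C D = square_diag2 (s mod 3) C D"
proof -
  have "C (r + s + 1) = C (r + s mod 3 + 1)" for r
    using periodic3_seq_add_mod[OF assms(1), of "r + 1" s] by (simp add: ac_simps)
  then show ?thesis
    using assms by (simp add: square_diag2_def periodic3_seq_add_mod[of D _ s])
qed

lemma pow2_mod3: "(2::nat) ^ k mod 3 = (if even k then 1 else 2)"
proof (induction k)
  case (Suc k)
  have "(2::nat) ^ Suc k mod 3 = 2 * (2 ^ k mod 3) mod 3"
    by (simp add: mod_mult_right_eq)
  with Suc show ?case
    by auto
qed simp

lemma periodic3_imult:
  assumes "periodic3 X" "periodic3 Y"
  shows "periodic3 (X \<odot> Y)"
  unfolding periodic3_def
proof (intro allI impI)
  fix r s :: nat assume rs: "1 \<le> r \<and> 1 \<le> s"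
  have "(X \<odot> Y) (r + 3) (s + 3) = (\<Sum>t\<in>{r..s}. X (r + 3) (t + 3) ** Y (t + 3) (s + 3))"
    unfolding imult_def by (rule sum.shift_bounds_cl_nat_ivl)
  also have "\<dots> = (X \<odot> Y) r s"
    using assms rs unfolding imult_def by (intro sum.cong) (auto simp: periodic3_def)
  finally show "(X \<odot> Y) (r + 3) (s + 3) = (X \<odot> Y) r s" .
qed

lemma periodic3_Iim [simp]: "periodic3 Iim"
  by (simp add: periodic3_def Iim_def)

lemma periodic3_ipow: "periodic3 X \<Longrightarrow> periodic3 (ipow X n)"
  by (induct n) (simp_all add: periodic3_imult)

lemma periodic3_iinv:
  assumes "periodic3 X"
  shows "periodic3 (iinv X)"
proof -
  have "periodic3 (\<lambda>a b. - (X a b - Iim a b))"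
    using assms by (simp add: periodic3_def Iim_def)
  then show ?thesis
    by (simp add: periodic3_def iinv_def periodic3_ipow[unfolded periodic3_def])
qed

text \<open>
  \<open>B1\<close> and \<open>B3\<close> are the second diagonals of \<open>X\<^sup>n\<close> for \<open>n \<equiv> 1\<close> and \<open>n \<equiv> 3 (mod 4)\<close>;
  \<open>(C1, D1)\<close> and \<open>(C2, D2)\<close> are the first two nonzero diagonals of \<open>X\<^sup>n\<close> when the 2-adic
  valuation \<open>v\<close> of \<open>n\<close> is odd resp. even. Squaring shifts by \<open>2\<^sup>v mod 3\<close>, which is 2 for odd
  \<open>v\<close> and 1 for even \<open>v\<close> (and 1 for the squares of odd powers).
\<close>

locale power_pattern =
  fixes X :: imat and A B1 B3 C1 D1 C2 D2 :: "nat \<Rightarrow> blk"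
  assumes leading_X: "leading_diags 0 A B1 X"
    and B3_eq: "(\<lambda>r. B1 r + C1 r) = B3"
    and square_A: "square_diag1 1 A = C1"
    and square_B1: "square_diag2 1 A B1 = D1"
    and square_B3: "square_diag2 1 A B3 = D1"
    and square_C1: "square_diag1 2 C1 = C2"
    and square_D1: "square_diag2 2 C1 D1 = D2"
    and square_C2: "square_diag1 1 C2 = C1"
    and square_D2: "square_diag2 1 C2 D2 = D1"
    and periodic: "periodic3_seq C1" "periodic3_seq D1" "periodic3_seq C2" "periodic3_seq D2"
begin

definition valuation_diag1 :: "nat \<Rightarrow> nat \<Rightarrow> blk" where
  "valuation_diag1 v = (if odd v then C1 else C2)"

definition valuation_diag2 :: "nat \<Rightarrow> nat \<Rightarrow> blk" where
  "valuation_diag2 v = (if odd v then D1 else D2)"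

lemma square_odd_power:
  assumes "leading_diags 0 A B Y" "B = B1 \<or> B = B3"
  shows "leading_diags 1 C1 D1 (Y \<odot> Y)"
proof -
  have "square_diag2 1 A B = D1"
    using assms(2) square_B1 square_B3 by (elim disjE) simp_all
  then show ?thesis
    using leading_diags_square[OF assms(1)] square_A by simp
qed

lemma square_even_power:
  assumes "1 \<le> v" "leading_diags (2 ^ v - 1) (valuation_diag1 v) (valuation_diag2 v) Y"
  shows "leading_diags (2 ^ Suc v - 1) (valuation_diag1 (Suc v)) (valuation_diag2 (Suc v)) (Y \<odot> Y)"
proof -
  have "(1::nat) \<le> 2 ^ v"
    by simp
  then have "2 * (2 ^ v - 1) + 1 = 2 * 2 ^ v - (1::nat)" and "2 ^ v - 1 + 1 = (2::nat) ^ v"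
    by linarith+
  moreover have per: "periodic3_seq (valuation_diag1 v)" "periodic3_seq (valuation_diag2 v)"
    using periodic by (simp_all add: valuation_diag1_def valuation_diag2_def)
  have "square_diag1 (2 ^ v) (valuation_diag1 v) = valuation_diag1 (Suc v)"
    using square_diag1_mod3[OF per(1), of "2 ^ v"] square_C1 square_C2
    by (cases "odd v") (simp_all add: pow2_mod3 valuation_diag1_def)
  moreover have "square_diag2 (2 ^ v) (valuation_diag1 v) (valuation_diag2 v) = valuation_diag2 (Suc v)"
    using square_diag2_mod3[OF per, of "2 ^ v"] square_D1 square_D2
    by (cases "odd v") (simp_all add: pow2_mod3 valuation_diag1_def valuation_diag2_def)
  ultimately show ?thesis
    using leading_diags_square[OF assms(2)] by (simp only: power_Suc)
qed

lemma mult_even_power: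
  assumes "1 \<le> v" "leading_diags (2 ^ v - 1) (valuation_diag1 v) (valuation_diag2 v) Y"
  shows "leading_diags 0 A (if v = 1 then B3 else B1) (X \<odot> Y)"
proof (cases "v = 1")
  case True
  then have "leading_diags 0 A (\<lambda>r. B1 r + C1 r) (X \<odot> Y)"
    using leading_diags_imult_sparse[OF leading_X assms(2)] by (simp add: valuation_diag1_def)
  then show ?thesis
    using True B3_eq by simp
next
  case False
  then have "(4::nat) \<le> 2 ^ v"
    using power_increasing[of 2 v "2::nat"] \<open>1 \<le> v\<close> by simp
  then have "1 \<le> 2 ^ v - (1::nat)" "2 ^ v - 1 \<noteq> (1::nat)"
    by linarith+
  then have "leading_diags 0 A (\<lambda>r. B1 r + 0) (X \<odot> Y)"
    using leading_diags_imult_sparse[OF leading_X assms(2)] by simp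
  then show ?thesis
    using False by simp
qed

lemma ipow_leading_diags:
  "1 \<le> n \<Longrightarrow>
    (odd n \<longrightarrow> leading_diags 0 A B1 (ipow X n) \<or> leading_diags 0 A B3 (ipow X n)) \<and>
    (even n \<longrightarrow> (\<exists>v\<ge>1. leading_diags (2 ^ v - 1) (valuation_diag1 v) (valuation_diag2 v) (ipow X n)))"
proof (induction n rule: less_induct)
  case (less n)
  consider "n = 1" | m where "n = Suc (2 * m)" "1 \<le> m" | m where "n = 2 * m" "1 \<le> m"
  proof (cases "even n")
    case True
    then obtain m where "n = 2 * m" ..
    with \<open>1 \<le> n\<close> that(3) show ?thesis by simp
  next
    case False
    then obtain m where "n = Suc (2 * m)" by (rule oddE) simp
    with that(1,2) show ?thesis by (cases "m = 0") simp_all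
  qed
  then show ?case
  proof cases
    case 1
    then show ?thesis
      using leading_X by (simp add: imult_Iim leading_diags_def)
  next
    case (2 m)
    then have "2 * m < n" "1 \<le> 2 * m"
      by simp_all
    then obtain v where "1 \<le> v" "leading_diags (2 ^ v - 1) (valuation_diag1 v) (valuation_diag2 v) (ipow X (2 * m))"
      using less.IH[of "2 * m"] by auto
    then have "leading_diags 0 A (if v = 1 then B3 else B1) (ipow X n)"
      using mult_even_power \<open>n = Suc (2 * m)\<close> by simp
    then show ?thesis
      using \<open>n = Suc (2 * m)\<close> by (cases "v = 1") simp_all
  next
    case (3 m)
    then have "even n" "m < n"
      by simp_all
    have square: "ipow X n = ipow X m \<odot> ipow X m"
      using \<open>n = 2 * m\<close> ipow_add[of X m m] by (simp add: mult_2)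
    have "\<exists>v\<ge>1. leading_diags (2 ^ v - 1) (valuation_diag1 v) (valuation_diag2 v) (ipow X n)"
    proof (cases "odd m")
      case True
      then have "leading_diags 0 A B1 (ipow X m) \<or> leading_diags 0 A B3 (ipow X m)"
        using less.IH[OF \<open>m < n\<close> \<open>1 \<le> m\<close>] by simp
      then have "leading_diags 1 C1 D1 (ipow X n)"
        unfolding square using square_odd_power by blast
      then have "leading_diags (2 ^ 1 - 1) (valuation_diag1 1) (valuation_diag2 1) (ipow X n)"
        by (simp add: valuation_diag1_def valuation_diag2_def)
      then show ?thesis
        by (intro exI[of _ 1]) simp
    next
      case False
      then obtain v where "1 \<le> v" "leading_diags (2 ^ v - 1) (valuation_diag1 v) (valuation_diag2 v) (ipow X m)"
        using less.IH[OF \<open>m < n\<close> \<open>1 \<le> m\<close>] by auto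
      then have "leading_diags (2 ^ Suc v - 1) (valuation_diag1 (Suc v)) (valuation_diag2 (Suc v)) (ipow X n)"
        unfolding square by (rule square_even_power)
      then show ?thesis
        by (intro exI[of _ "Suc v"]) simp
    qed
    with \<open>even n\<close> show ?thesis
      by simp
  qed
qed

lemma ipow_cases:
  assumes "1 \<le> n"
  shows "leading_diags 0 A B1 (ipow X n) \<or> leading_diags 0 A B3 (ipow X n) \<or>
    (\<exists>v. odd v \<and> v \<ge> 1 \<and> leading_diags (2 ^ v - 1) C1 D1 (ipow X n)) \<or>
    (\<exists>v. even v \<and> v \<ge> 2 \<and> leading_diags (2 ^ v - 1) C2 D2 (ipow X n))"
proof (cases "odd n")
  case True
  then have "leading_diags 0 A B1 (ipow X n) \<or> leading_diags 0 A B3 (ipow X n)"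
    using ipow_leading_diags[OF assms] by simp
  then show ?thesis
    by (elim disjE) simp_all
next
  case False
  then obtain v where v: "1 \<le> v" "leading_diags (2 ^ v - 1) (valuation_diag1 v) (valuation_diag2 v) (ipow X n)"
    using ipow_leading_diags[OF assms] by auto
  show ?thesis
  proof (cases "odd v")
    case True
    with v have "leading_diags (2 ^ v - 1) C1 D1 (ipow X n)"
      by (simp add: valuation_diag1_def valuation_diag2_def)
    with v True show ?thesis
      by blast
  next
    case False
    with \<open>1 \<le> v\<close> have "2 \<le> v"
      by presburger
    moreover from v False have "leading_diags (2 ^ v - 1) C2 D2 (ipow X n)"
      by (simp add: valuation_diag1_def valuation_diag2_def)
    ultimately show ?thesis
      using False by blast
  qed
qed

end

definition code_diag :: "dcode \<Rightarrow> nat \<Rightarrow> blk" where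
  "code_diag c r = diag_blk c (cls3 r)"

lemma periodic3_seq_code_diag: "periodic3_seq (code_diag c)"
  by (simp add: periodic3_seq_def code_diag_def cls3_def)

lemma idx3_simps [simp]: "idx3 1 = 1" "idx3 2 = 2" "idx3 3 = 0"
  by (simp_all add: idx3_def)

lemmas code_diag_eval =
  code_diag_def cls3_def diag_blk_def blk_of_code_def vec_eq_iff forall_3 matrix_matrix_mult_def sum_3

lemmas periodic3_seq_intros =
  periodic3_seq_code_diag periodic3_seq_add periodic3_seq_mult periodic3_seq_shift

lemma leading_diags_Mfin: "leading_diags 0 (code_diag c) (code_diag d) (Mfin (c # d # cs))"
  by (simp add: leading_diags_0_iff upper_tri_def unit_diag_def Mfin_def code_diag_def)

lemma periodic3_Mfin: "periodic3 (Mfin cs)"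
  by (simp add: periodic3_def Mfin_def cls3_def)

lemma is_M_leading_diags:
  assumes lead: "leading_diags l (code_diag c) (code_diag d) X" and "periodic3 X"
  shows "is_M l [c, d] X"
proof -
  have cls: "cls3 i = i" if "1 \<le> i" "i \<le> 3" for i
  proof -
    have "i = 1 \<or> i = 2 \<or> i = 3"
      using that by auto
    then show ?thesis
      by (auto simp: cls3_def)
  qed
  have "X i (i + l + 1 + k) = diag_blk ([c, d] ! k) i" if "k < 2" "1 \<le> i" "i \<le> 3" for k i
    using lead that cls[of i] less_2_cases[of k] by (auto simp: leading_diags_def code_diag_def add.assoc)
  then show ?thesis
    using lead \<open>periodic3 X\<close>
    by (auto simp: is_M_def upper_unitri_def leading_diags_def upper_tri_def unit_diag_def)
qed

lemma leading_diags_x0_x1: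
  "leading_diags 0 (code_diag (28,235,129)) (code_diag (46,138,451)) (x0 \<odot> x1)"
  unfolding x0_def x1_def
  by (rule leading_diags_imult[OF leading_diags_Mfin leading_diags_Mfin];
      rule periodic3_seq_eqI; (intro periodic3_seq_intros)?; simp add: code_diag_eval)

lemma leading_diags_xx: "leading_diags 0 (code_diag (28,235,129)) (code_diag (29,211,263)) xx"
  unfolding xx_def
  by (rule leading_diags_iinv[OF leading_diags_x0_x1];
      rule periodic3_seq_eqI; (intro periodic3_seq_intros)?; simp add: code_diag_eval)

lemma leading_diags_iinv_x2: "leading_diags 0 (code_diag (46,68,217)) (code_diag (37,129,437)) (iinv x2)"
  unfolding x2_def
  by (rule leading_diags_iinv[OF leading_diags_Mfin];
      rule periodic3_seq_eqI; (intro periodic3_seq_intros)?; simp add: code_diag_eval)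

lemma leading_diags_x2_xx: "leading_diags 0 (code_diag (50,175,88)) (code_diag (23,83,400)) (x2 \<odot> xx)"
  unfolding x2_def
  by (rule leading_diags_imult[OF leading_diags_Mfin leading_diags_xx];
      rule periodic3_seq_eqI; (intro periodic3_seq_intros)?; simp add: code_diag_eval)

lemma leading_diags_yy: "leading_diags 0 (code_diag (28,235,129)) (code_diag (58,3,445)) yy"
  unfolding yy_def
  by (rule leading_diags_imult[OF leading_diags_x2_xx leading_diags_iinv_x2];
      rule periodic3_seq_eqI; (intro periodic3_seq_intros)?; simp add: code_diag_eval)

lemma periodic3_xx: "periodic3 xx"
  by (simp add: xx_def x0_def x1_def periodic3_iinv periodic3_imult periodic3_Mfin)

lemma periodic3_yy: "periodic3 yy"
  by (simp add: yy_def x2_def periodic3_xx periodic3_iinv periodic3_imult periodic3_Mfin)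

lemma power_pattern_xx:
  "power_pattern xx (code_diag (28,235,129)) (code_diag (29,211,263)) (code_diag (46,138,451))
     (code_diag (51,89,196)) (code_diag (0,0,0)) (code_diag (28,235,129)) (code_diag (0,0,0))"
  by (unfold_locales; (rule leading_diags_xx periodic3_seq_code_diag)?;
      (unfold square_diag1_def square_diag2_def)?;
      rule periodic3_seq_eqI; (intro periodic3_seq_intros)?; simp add: code_diag_eval)

lemma power_pattern_yy:
  "power_pattern yy (code_diag (28,235,129)) (code_diag (58,3,445)) (code_diag (9,90,377))
     (code_diag (51,89,196)) (code_diag (0,157,106)) (code_diag (28,235,129)) (code_diag (39,208,186))"
  by (unfold_locales; (rule leading_diags_yy periodic3_seq_code_diag)?;
      (unfold square_diag1_def square_diag2_def)?;
      rule periodic3_seq_eqI; (intro periodic3_seq_intros)?; simp add: code_diag_eval)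

lemma ipow_is_M_cases:
  assumes "power_pattern X (code_diag a) (code_diag b1) (code_diag b3)
      (code_diag c1) (code_diag d1) (code_diag c2) (code_diag d2)"
    and "periodic3 X"
  shows "\<forall>n\<ge>1.
     is_M 0 [a, b1] (ipow X n) \<or>
     is_M 0 [a, b3] (ipow X n) \<or>
     (\<exists>r. odd r \<and> r \<ge> 1 \<and> is_M (2 ^ r - 1) [c1, d1] (ipow X n)) \<or>
     (\<exists>r. even r \<and> r \<ge> 2 \<and> is_M (2 ^ r - 1) [c2, d2] (ipow X n))"
  using power_pattern.ipow_cases[OF assms(1)] is_M_leading_diags periodic3_ipow[OF assms(2)] by meson

theorem corollary4p4:
  shows "(\<forall>n\<ge>1.
     is_M 0 [(28,235,129),(29,211,263)] (ipow xx n) \<or>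
     is_M 0 [(28,235,129),(46,138,451)] (ipow xx n) \<or>
     (\<exists>r. odd r \<and> r \<ge> 1 \<and> is_M (2 ^ r - 1) [(51,89,196),(0,0,0)] (ipow xx n)) \<or>
     (\<exists>r. even r \<and> r \<ge> 2 \<and> is_M (2 ^ r - 1) [(28,235,129),(0,0,0)] (ipow xx n))) \<and>
    (\<forall>n\<ge>1.
     is_M 0 [(28,235,129),(58,3,445)] (ipow yy n) \<or>
     is_M 0 [(28,235,129),(9,90,377)] (ipow yy n) \<or>
     (\<exists>r. odd r \<and> r \<ge> 1 \<and> is_M (2 ^ r - 1) [(51,89,196),(0,157,106)] (ipow yy n)) \<or>
     (\<exists>r. even r \<and> r \<ge> 2 \<and> is_M (2 ^ r - 1) [(28,235,129),(39,208,186)] (ipow yy n)))"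
  using ipow_is_M_cases[OF power_pattern_xx periodic3_xx]
    ipow_is_M_cases[OF power_pattern_yy periodic3_yy]
  by (rule conjI)

end
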